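(* Let $\lambda_1\ge\lambda_2\ge\dots\ge\lambda_p\ge0$ satisfy $3\lambda_1^2\le\Lambda^2:=\sum_{j=1}^p\lambda_j^2$, and define $h_j(t)=(1+\lambda_j^2t^2)^{-1/4}$ for $j=1,\dots,p$. Then \[ \int_0^\infty\prod_{j=1}^p h_j(t)\,dt\le\frac{C}{\Lambda} \] for an absolute constant $C$. *)

theory Defs
  imports "HOL-Analysis.Analysis"
begin

end

theory Submission
  imports Defs
begin

text \<open>
  Put \<open>a\<^sub>j = \<lambda>\<^sub>j\<^sup>2\<close> and \<open>s = \<Lambda>\<^sup>2 = \<Sum>\<^sub>j a\<^sub>j\<close>. Expanding \<open>\<Prod>\<^sub>j (1 + a\<^sub>j t\<^sup>2)\<close> and keeping only
  the constant and the cubic term gives \<open>\<Prod>\<^sub>j h\<^sub>j(t)\<^sup>-\<^sup>4 \<ge> 1 + e\<^sub>3(a) t\<^sup>6\<close>, where \<open>e\<^sub>3\<close> is the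
  third elementary symmetric polynomial. The hypothesis \<open>a\<^sub>j \<le> s/3\<close> together with
  Cauchy-Schwarz yields \<open>e\<^sub>3(a) \<ge> s\<^sup>3/27\<close>, so with \<open>u = t \<surd>(s/3)\<close> the integrand is at most
  \<open>(1 + u\<^sup>6)\<^sup>-\<^sup>1\<^sup>/\<^sup>4 \<le> 3 (1 + u)\<^sup>-\<^sup>3\<^sup>/\<^sup>2\<close>, whose integral over \<open>[0, \<infinity>)\<close> is \<open>6 \<surd>3 / \<Lambda>\<close>.
\<close>

text \<open>The elementary symmetric polynomials of degree 2 and 3, written through power sums
  (Newton's identities).\<close>

definition esym2 :: "'a set \<Rightarrow> ('a \<Rightarrow> real) \<Rightarrow> real" where
  "esym2 A a = ((\<Sum>i\<in>A. a i)^2 - (\<Sum>i\<in>A. a i^2)) / 2"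

definition esym3 :: "'a set \<Rightarrow> ('a \<Rightarrow> real) \<Rightarrow> real" where
  "esym3 A a = ((\<Sum>i\<in>A. a i)^3 - 3 * (\<Sum>i\<in>A. a i) * (\<Sum>i\<in>A. a i^2) + 2 * (\<Sum>i\<in>A. a i^3)) / 6"

lemma esym2_empty [simp]: "esym2 {} a = 0"
  by (simp add: esym2_def)

lemma esym3_empty [simp]: "esym3 {} a = 0"
  by (simp add: esym3_def)

lemma esym2_insert:
  "finite A \<Longrightarrow> b \<notin> A \<Longrightarrow> esym2 (insert b A) a = esym2 A a + a b * (\<Sum>i\<in>A. a i)"
  by (simp add: esym2_def field_simps power2_eq_square)

lemma esym3_insert:
  "finite A \<Longrightarrow> b \<notin> A \<Longrightarrow> esym3 (insert b A) a = esym3 A a + a b * esym2 A a"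
  by (simp add: esym3_def esym2_def field_simps power2_eq_square power3_eq_cube)

lemma esym2_nonneg:
  assumes "finite A" "\<forall>i\<in>A. 0 \<le> a i"
  shows "0 \<le> esym2 A a"
  using assms by (induction A rule: finite_induct) (auto simp: esym2_insert sum_nonneg)

lemma esym3_nonneg:
  assumes "finite A" "\<forall>i\<in>A. 0 \<le> a i"
  shows "0 \<le> esym3 A a"
  using assms by (induction A rule: finite_induct) (auto simp: esym3_insert esym2_nonneg)

lemma prod_one_plus_ge_esym:
  fixes a :: "'a \<Rightarrow> real"
  assumes "finite A" "\<forall>i\<in>A. 0 \<le> a i" "0 \<le> x"
  shows "1 + (\<Sum>i\<in>A. a i) * x + esym2 A a * x^2 + esym3 A a * x^3 \<le> (\<Prod>i\<in>A. 1 + a i * x)"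
  using assms(1,2)
proof (induction A rule: finite_induct)
  case empty
  then show ?case by simp
next
  case (insert b A)
  define q1 where "q1 = (\<Sum>i\<in>A. a i)"
  define e2 where "e2 = esym2 A a"
  define e3 where "e3 = esym3 A a"
  have ab: "0 \<le> a b" using insert.prems by simp
  have "0 \<le> a b * e3 * x^4"
    using ab assms(3) esym3_nonneg[OF insert.hyps(1)] insert.prems by (simp add: e3_def)
  then have "1 + (a b + q1) * x + (e2 + a b * q1) * x^2 + (e3 + a b * e2) * x^3
      \<le> (1 + a b * x) * (1 + q1 * x + e2 * x^2 + e3 * x^3)"
    by (simp add: algebra_simps power2_eq_square power3_eq_cube power4_eq_xxxx)
  also have "\<dots> \<le> (1 + a b * x) * (\<Prod>i\<in>A. 1 + a i * x)"
    using insert ab assms(3) by (intro mult_left_mono) (auto simp: q1_def e2_def e3_def)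
  finally show ?case
    using insert.hyps by (simp add: esym2_insert esym3_insert q1_def e2_def e3_def)
qed

lemma esym3_ge_cube:
  fixes a :: "'a \<Rightarrow> real"
  assumes nonneg: "\<forall>i\<in>A. 0 \<le> a i" and small: "\<forall>i\<in>A. 3 * a i \<le> (\<Sum>i\<in>A. a i)"
  shows "(\<Sum>i\<in>A. a i)^3 / 27 \<le> esym3 A a"
proof -
  define q1 where "q1 = (\<Sum>i\<in>A. a i)"
  define q2 where "q2 = (\<Sum>i\<in>A. a i^2)"
  define q3 where "q3 = (\<Sum>i\<in>A. a i^3)"
  have q1_nonneg: "0 \<le> q1" unfolding q1_def using nonneg by (simp add: sum_nonneg)
  have q2_nonneg: "0 \<le> q2" unfolding q2_def by (simp add: sum_nonneg)
  have q3_nonneg: "0 \<le> q3" unfolding q3_def using nonneg by (simp add: sum_nonneg)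
  have "3 * q2 \<le> (\<Sum>i\<in>A. q1 * a i)"
    unfolding q2_def sum_distrib_left
    using nonneg small
    by (intro sum_mono) (auto simp: power2_eq_square q1_def mult.assoc[symmetric] intro!: mult_right_mono)
  then have q2_le: "3 * q2 \<le> q1^2"
    by (simp add: q1_def sum_distrib_left[symmetric] power2_eq_square)
  have "(\<Sum>i\<in>A. sqrt (a i) * (a i * sqrt (a i)))\<^sup>2
      \<le> (\<Sum>i\<in>A. (sqrt (a i))\<^sup>2) * (\<Sum>i\<in>A. (a i * sqrt (a i))\<^sup>2)"
    by (rule Cauchy_Schwarz_ineq_sum)
  also have "(\<Sum>i\<in>A. sqrt (a i) * (a i * sqrt (a i))) = q2"
    unfolding q2_def using nonneg by (intro sum.cong) (auto simp: power2_eq_square)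
  also have "(\<Sum>i\<in>A. (sqrt (a i))\<^sup>2) = q1"
    unfolding q1_def using nonneg by (intro sum.cong) auto
  also have "(\<Sum>i\<in>A. (a i * sqrt (a i))\<^sup>2) = q3"
    unfolding q3_def using nonneg
    by (intro sum.cong) (auto simp: power_mult_distrib power3_eq_cube power2_eq_square)
  finally have cauchy_schwarz: "q2^2 \<le> q1 * q3" .
  have "q1 * (2 * q1^3 / 9) = (2 * q1^2 / 3) * (q1^2 / 3)"
    by (simp add: power2_eq_square power3_eq_cube)
  also have "\<dots> \<le> (q1^2 - q2) * (q1^2 - 2 * q2)"
    using q2_le q2_nonneg by (intro mult_mono) auto
  also have "\<dots> = q1 * (q1^3 - 3 * q1 * q2) + 2 * q2^2"
    by (simp add: algebra_simps power2_eq_square power3_eq_cube)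
  also have "\<dots> \<le> q1 * (q1^3 - 3 * q1 * q2 + 2 * q3)"
    using cauchy_schwarz by (simp add: algebra_simps)
  finally have scaled: "q1 * (2 * q1^3 / 9) \<le> q1 * (q1^3 - 3 * q1 * q2 + 2 * q3)" .
  have "2 * q1^3 / 9 \<le> q1^3 - 3 * q1 * q2 + 2 * q3"
  proof (cases "q1 = 0")
    case True
    then show ?thesis using q2_le q2_nonneg q3_nonneg by simp
  next
    case False
    then have "0 < q1" using q1_nonneg by simp
    then show ?thesis using scaled by (simp add: mult_le_cancel_left_pos)
  qed
  then show ?thesis
    by (simp add: esym3_def q1_def q2_def q3_def)
qed

lemma one_plus_pow6_le:
  fixes u :: real
  assumes "0 \<le> u"
  shows "(1 + u)^6 \<le> 32 * (1 + u^6)"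
proof -
  have square: "(1 + u)^2 \<le> 2 * (1 + u^2)"
    using zero_le_power2[of "1 - u"] by (simp add: power2_eq_square algebra_simps)
  have cube: "(1 + v)^3 \<le> 4 * (1 + v^3)" if "0 \<le> v" for v :: real
    using mult_nonneg_nonneg[OF zero_le_power2[of "1 - v"], of "1 + v"] that
    by (simp add: power2_eq_square power3_eq_cube algebra_simps)
  have "(1 + u)^6 = ((1 + u)^2)^3" by (simp flip: power_mult)
  also have "\<dots> \<le> (2 * (1 + u^2))^3" using square by (intro power_mono) auto
  also have "\<dots> = 8 * (1 + u^2)^3" by (simp only: power_mult_distrib) simp
  also have "\<dots> \<le> 8 * (4 * (1 + (u^2)^3))" using cube[of "u^2"] by simp
  also have "\<dots> = 32 * (1 + u^6)" by (simp flip: power_mult)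
  finally show ?thesis .
qed

lemma nn_integral_one_plus_powr_neg_three_halves:
  fixes b :: real
  assumes "0 < b"
  shows "(\<integral>\<^sup>+ t\<in>{0..}. ennreal ((1 + b * t) powr (-3/2)) \<partial>lborel) = ennreal (2 / b)"
proof -
  let ?F = "\<lambda>t. - (2 / b) * (1 + b * t) powr (-1/2)"
  have "(\<integral>\<^sup>+ t\<in>{0..}. ennreal ((1 + b * t) powr (-3/2)) \<partial>lborel) = ennreal (0 - ?F 0)"
  proof (rule nn_integral_FTC_atLeast)
    show "DERIV ?F x :> (1 + b * x) powr (-3/2)" if "0 \<le> x" for x
    proof -
      have "0 < 1 + b * x" using assms that by (simp add: add_pos_nonneg)
      then have "DERIV ?F x :> - (2 / b) * ((-1/2) * (1 + b * x) powr (-1/2 - 1) * b)"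
        by (auto intro!: derivative_eq_intros)
      then show ?thesis using assms by (simp add: field_simps)
    qed
    have "filterlim (\<lambda>t. 1 + b * t) at_top at_top"
      using assms by real_asymp
    then have "((\<lambda>t. (1 + b * t) powr (-1/2)) \<longlongrightarrow> 0) at_top"
      by (intro tendsto_neg_powr) auto
    then show "(?F \<longlongrightarrow> 0) at_top"
      using tendsto_mult_right_zero by blast
  qed auto
  then show ?thesis by simp
qed

lemma prod_powr_neg_quarter_le:
  fixes a :: "'a \<Rightarrow> real"
  assumes "finite A" "\<forall>i\<in>A. 0 \<le> a i" "\<forall>i\<in>A. 3 * a i \<le> s" "s = (\<Sum>i\<in>A. a i)" "0 < s"
    and "0 \<le> t"
  shows "(\<Prod>i\<in>A. (1 + a i * t^2) powr (-1/4)) \<le> 3 * (1 + sqrt (s / 3) * t) powr (-3/2)"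
proof -
  define x where "x = t^2"
  define u where "u = sqrt (s / 3) * t"
  have x_nonneg: "0 \<le> x" and u_nonneg: "0 \<le> u"
    using assms by (simp_all add: x_def u_def)
  have "u^6 = ((sqrt (s / 3))^2)^3 * (t^2)^3"
    by (simp add: u_def power_mult_distrib flip: power_mult)
  also have "\<dots> = s^3 / 27 * x^3"
    using assms by (simp add: x_def power_divide)
  also have "\<dots> \<le> esym3 A a * x^3"
    using esym3_ge_cube[of A a] assms x_nonneg by (intro mult_right_mono) auto
  moreover have "0 \<le> (\<Sum>i\<in>A. a i) * x" "0 \<le> esym2 A a * x^2"
    using assms x_nonneg esym2_nonneg[of A a] by (simp_all add: sum_nonneg)
  ultimately have "1 + u^6 \<le> 1 + (\<Sum>i\<in>A. a i) * x + esym2 A a * x^2 + esym3 A a * x^3"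
    by linarith
  also have "\<dots> \<le> (\<Prod>i\<in>A. 1 + a i * x)"
    using prod_one_plus_ge_esym assms x_nonneg by blast
  finally have prod_ge: "(1 + u)^6 / 32 \<le> (\<Prod>i\<in>A. 1 + a i * x)"
    using one_plus_pow6_le[OF u_nonneg] by (simp add: divide_le_eq)
  have "(\<Prod>i\<in>A. (1 + a i * t^2) powr (-1/4)) = (\<Prod>i\<in>A. 1 + a i * x) powr (-1/4)"
    by (simp add: prod_powr_distrib x_def)
  also have "\<dots> \<le> ((1 + u)^6 / 32) powr (-1/4)"
    using prod_ge u_nonneg by (intro powr_mono2') auto
  also have "\<dots> = (1 + u) powr (-3/2) * 32 powr (1/4)"
  proof -
    have "((1 + u)^6) powr (-1/4) = ((1 + u) powr 6) powr (-1/4)"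
      using u_nonneg by (simp add: powr_realpow)
    then show ?thesis
      by (simp add: powr_divide powr_minus_divide powr_powr)
  qed
  also have "\<dots> \<le> (1 + u) powr (-3/2) * 3"
  proof (intro mult_left_mono)
    have "(32::real) powr (1/4) \<le> (3 powr 4) powr (1/4)" by (intro powr_mono2) auto
    then show "(32::real) powr (1/4) \<le> 3" by (simp add: powr_powr)
  qed simp
  finally show ?thesis by (simp add: u_def)
qed

lemma nn_integral_prod_powr_neg_quarter_le:
  fixes a :: "'a \<Rightarrow> real"
  assumes "finite A" "\<forall>i\<in>A. 0 \<le> a i" "\<forall>i\<in>A. 3 * a i \<le> s" "s = (\<Sum>i\<in>A. a i)" "0 < s"
  shows "(\<integral>\<^sup>+ t\<in>{0..}. ennreal (\<Prod>i\<in>A. (1 + a i * t^2) powr (-1/4)) \<partial>lborel)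
    \<le> ennreal (6 * sqrt 3 / sqrt s)"
proof -
  define b where "b = sqrt (s / 3)"
  have b_pos: "0 < b" using assms by (simp add: b_def)
  have "(\<integral>\<^sup>+ t\<in>{0..}. ennreal (\<Prod>i\<in>A. (1 + a i * t^2) powr (-1/4)) \<partial>lborel)
      \<le> (\<integral>\<^sup>+ t. ennreal 3 * (ennreal ((1 + b * t) powr (-3/2)) * indicator {0..} t) \<partial>lborel)"
  proof (intro nn_integral_mono)
    fix t :: real
    have "ennreal (\<Prod>i\<in>A. (1 + a i * t^2) powr (-1/4)) \<le> ennreal (3 * (1 + b * t) powr (-3/2))"
      if "0 \<le> t"
      using prod_powr_neg_quarter_le[OF assms that] by (simp add: b_def ennreal_leI)
    then show "ennreal (\<Prod>i\<in>A. (1 + a i * t^2) powr (-1/4)) * indicator {0..} t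
        \<le> ennreal 3 * (ennreal ((1 + b * t) powr (-3/2)) * indicator {0..} t)"
      by (simp add: indicator_def ennreal_mult)
  qed
  also have "\<dots> = ennreal 3 * ennreal (2 / b)"
    using nn_integral_one_plus_powr_neg_three_halves[OF b_pos] by (simp add: nn_integral_cmult)
  also have "\<dots> = ennreal (3 * (2 / b))"
    using b_pos by (intro ennreal_mult[symmetric]) auto
  also have "3 * (2 / b) = 6 * sqrt 3 / sqrt s"
    by (simp add: b_def real_sqrt_divide)
  finally show ?thesis .
qed

theorem lemmaA2:
  shows "\<exists>C::real. \<forall>(p::nat) (lam::nat \<Rightarrow> real).
    (\<forall>j\<in>{1..p}. 0 \<le> lam j) \<and>
    (\<forall>i j. 1 \<le> i \<and> i \<le> j \<and> j \<le> p \<longrightarrow> lam j \<le> lam i) \<and>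
    3 * (lam 1)^2 \<le> (\<Sum>j=1..p. (lam j)^2) \<and>
    0 < (\<Sum>j=1..p. (lam j)^2)
    \<longrightarrow> (\<integral>\<^sup>+ t\<in>{0..}. ennreal (\<Prod>j=1..p. (1 + (lam j)^2 * t^2) powr (-1/4)) \<partial>lborel)
        \<le> ennreal (C / sqrt (\<Sum>j=1..p. (lam j)^2))"
proof (intro exI[of _ "6 * sqrt 3"] allI impI, elim conjE)
  fix p :: nat and lam :: "nat \<Rightarrow> real"
  assume nonneg: "\<forall>j\<in>{1..p}. 0 \<le> lam j"
    and decreasing: "\<forall>i j. 1 \<le> i \<and> i \<le> j \<and> j \<le> p \<longrightarrow> lam j \<le> lam i"
    and top: "3 * (lam 1)^2 \<le> (\<Sum>j=1..p. (lam j)^2)"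
    and pos: "0 < (\<Sum>j=1..p. (lam j)^2)"
  have "3 * (lam j)^2 \<le> (\<Sum>j=1..p. (lam j)^2)" if "j \<in> {1..p}" for j
  proof -
    have "(lam j)^2 \<le> (lam 1)^2"
      using that nonneg decreasing by (intro power_mono) auto
    then show ?thesis using top by linarith
  qed
  then show "(\<integral>\<^sup>+ t\<in>{0..}. ennreal (\<Prod>j=1..p. (1 + (lam j)^2 * t^2) powr (-1/4)) \<partial>lborel)
        \<le> ennreal (6 * sqrt 3 / sqrt (\<Sum>j=1..p. (lam j)^2))"
    using nn_integral_prod_powr_neg_quarter_le[of "{1..p}" "\<lambda>j. (lam j)^2"] pos by auto
qed

end
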